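(* Let $\Sigma$ be a finite alphabet, $L \subseteq \Sigma^*$ regular, and $\mathcal{A}$ a finite automaton for $L$ with $m$ states. Assume that $\mathcal{B} = \mathcal{A}^{\mathsf{R}\mathsf{D}}$ is well-behaved. There are constants $c_m, d_m$ depending only on $m$ such that: (i) if $\mathcal{A}$ is a DFA, then $V_L(n) \leq (2^m \cdot m + 1)\cdot \log n + c_m$ for all sufficiently large $n$; (ii) if $\mathcal{A}$ is an NFA, then $V_L(n) \leq (4^m + 1)\cdot\log n + d_m$ for all sufficiently large $n$.
   Context: $\log x$ denotes $\lfloor \log_2 x\rfloor$. For an NFA $\mathcal{A}$, $\mathcal{A}^\mathsf{R}$ is the NFA obtained by reversing all transitions and swapping initial and final state sets, and $\mathcal{A}^{\mathsf{RD}}$ is the subset-construction DFA of $\mathcal{A}^\mathsf{R}$ restricted to states reachable from its initial state (so it accepts $L^\mathsf{R}$). A DFA $(Q,\Sigma,q_0,\delta,F)$ is well-behaved if every strongly connected component $C$ (inclusion-maximal set of mutually reachable states) reachable from $q_0$ satisfies: for all $q\in C$ and $u,v\in\Sigma^*$ with $|u|=|v|$ and $\delta(q,u),\delta(q,v)\in C$, $\delta(q,u)\in F \iff \delta(q,v)\in F$. Variable-size sliding window model: a streaming algorithm over $\overline\Sigma$ is a deterministic (possibly infinite-state) automaton with an injective encoding $\mathrm{enc}$ of states into bit strings, and $\mathrm{space}(\mathcal{A},w)=\max\{|\mathrm{enc}(\mathcal{A}(u))|: u\text{ prefix of }w\}$. Let $\overline\Sigma=\Sigma\cup\{\downarrow\}$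 and $\mathrm{wnd}\colon\overline\Sigma^*\to\Sigma^*$ given by $\mathrm{wnd}(\varepsilon)=\varepsilon$, $\mathrm{wnd}(ub)=\mathrm{wnd}(u)b$ ($b\in\Sigma$), $\mathrm{wnd}(u\!\downarrow)=\varepsilon$ if $\mathrm{wnd}(u)=\varepsilon$, $\mathrm{wnd}(u\!\downarrow)=v$ if $\mathrm{wnd}(u)=bv$. A variable-size sliding window algorithm for $L$ is a streaming algorithm over $\overline\Sigma$ accepting $\{w:\mathrm{wnd}(w)\in L\}$, with space complexity $v_\mathcal{A}(n)=\max\{\mathrm{space}(\mathcal{A},u): |\mathrm{wnd}(v)|\le n\text{ for all prefixes }v\text{ of }u\}$. $V_L(n)$ is the minimum of $v_\mathcal{A}(n)$ over all variable-size sliding window algorithms $\mathcal{A}$ for $L$. *)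

theory Defs
  imports Complex_Main "HOL-Library.Discrete_Functions" "HOL-Library.Extended_Nat"
begin

(* The letter "\<down>" of the extended alphabet is None,
   a letter b of Sigma is Some b. *)

record nfa =
  states :: "nat set"
  init   :: "nat set"
  final  :: "nat set"
  trans  :: "nat \<Rightarrow> nat \<Rightarrow> nat set"

definition is_nfa :: "nat set \<Rightarrow> nfa \<Rightarrow> bool" where
  "is_nfa \<Sigma> A \<longleftrightarrow> finite (states A) \<and> init A \<subseteq> states A \<and> final A \<subseteq> states A \<and>
     (\<forall>q\<in>states A. \<forall>a\<in>\<Sigma>. trans A q a \<subseteq> states A)"

definition is_dfa :: "nat set \<Rightarrow> nfa \<Rightarrow> bool" where
  "is_dfa \<Sigma> A \<longleftrightarrow> is_nfa \<Sigma> A \<and> card (init A) = 1 \<and>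
     (\<forall>q\<in>states A. \<forall>a\<in>\<Sigma>. card (trans A q a) = 1)"

definition step_set :: "nfa \<Rightarrow> nat set \<Rightarrow> nat \<Rightarrow> nat set" where
  "step_set A S a = (\<Union>q\<in>S. trans A q a)"

definition steps :: "nfa \<Rightarrow> nat set \<Rightarrow> nat list \<Rightarrow> nat set" where
  "steps A S w = fold (\<lambda>a S. step_set A S a) w S"

definition lang :: "nat set \<Rightarrow> nfa \<Rightarrow> nat list set" where
  "lang \<Sigma> A = {w \<in> lists \<Sigma>. steps A (init A) w \<inter> final A \<noteq> {}}"

definition rev_nfa :: "nfa \<Rightarrow> nfa" where
  "rev_nfa A = \<lparr>states = states A, init = final A, final = init A,
                trans = (\<lambda>q a. {p \<in> states A. q \<in> trans A p a})\<rparr>"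

record 's dfa =
  dstates :: "'s set"
  dinit   :: 's
  dtrans  :: "'s \<Rightarrow> nat \<Rightarrow> 's"
  dfinal  :: "'s set"

definition dreach :: "'s dfa \<Rightarrow> 's \<Rightarrow> nat list \<Rightarrow> 's" where
  "dreach D q u = fold (\<lambda>a q. dtrans D q a) u q"

definition rd :: "nat set \<Rightarrow> nfa \<Rightarrow> nat set dfa" where
  "rd \<Sigma> A = \<lparr>dstates = {steps (rev_nfa A) (init (rev_nfa A)) u | u. u \<in> lists \<Sigma>},
              dinit = init (rev_nfa A),
              dtrans = (\<lambda>S a. step_set (rev_nfa A) S a),
              dfinal = {S \<in> {steps (rev_nfa A) (init (rev_nfa A)) u | u. u \<in> lists \<Sigma>}.
                          S \<inter> final (rev_nfa A) \<noteq> {}}\<rparr>"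

definition reach :: "nat set \<Rightarrow> 's dfa \<Rightarrow> 's \<Rightarrow> 's \<Rightarrow> bool" where
  "reach \<Sigma> D p q \<longleftrightarrow> (\<exists>u\<in>lists \<Sigma>. dreach D p u = q)"

definition scc :: "nat set \<Rightarrow> 's dfa \<Rightarrow> 's \<Rightarrow> 's set" where
  "scc \<Sigma> D q = {p. reach \<Sigma> D q p \<and> reach \<Sigma> D p q}"

definition well_behaved :: "nat set \<Rightarrow> 's dfa \<Rightarrow> bool" where
  "well_behaved \<Sigma> D \<longleftrightarrow>
     (\<forall>C. (\<exists>q. reach \<Sigma> D (dinit D) q \<and> C = scc \<Sigma> D q) \<longrightarrow>
        (\<forall>q\<in>C. \<forall>u\<in>lists \<Sigma>. \<forall>v\<in>lists \<Sigma>.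
           length u = length v \<and> dreach D q u \<in> C \<and> dreach D q v \<in> C \<longrightarrow>
           (dreach D q u \<in> dfinal D \<longleftrightarrow> dreach D q v \<in> dfinal D)))"

record 's stream_alg =
  sinit :: 's
  sstep :: "'s \<Rightarrow> nat option \<Rightarrow> 's"
  sacc  :: "'s set"
  senc  :: "'s \<Rightarrow> bool list"

definition ext_alph :: "nat set \<Rightarrow> nat option set" where
  "ext_alph \<Sigma> = Some ` \<Sigma> \<union> {None}"

definition srun :: "'s stream_alg \<Rightarrow> nat option list \<Rightarrow> 's" where
  "srun A w = fold (\<lambda>a s. sstep A s a) w (sinit A)"

definition space :: "'s stream_alg \<Rightarrow> nat option list \<Rightarrow> nat" where
  "space A w = Max {length (senc A (srun A (take i w))) | i. i \<le> length w}"

fun wstep :: "nat option \<Rightarrow> nat list \<Rightarrow> nat list" where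
  "wstep (Some b) x = x @ [b]"
| "wstep None x = tl x"

definition wnd :: "nat option list \<Rightarrow> nat list" where
  "wnd w = fold wstep w []"

definition is_sw_alg :: "nat set \<Rightarrow> nat list set \<Rightarrow> 's stream_alg \<Rightarrow> bool" where
  "is_sw_alg \<Sigma> L A \<longleftrightarrow> inj (senc A) \<and>
     (\<forall>w\<in>lists (ext_alph \<Sigma>). srun A w \<in> sacc A \<longleftrightarrow> wnd w \<in> L)"

definition v_space :: "nat set \<Rightarrow> 's stream_alg \<Rightarrow> nat \<Rightarrow> enat" where
  "v_space \<Sigma> A n = (SUP u \<in> {u \<in> lists (ext_alph \<Sigma>). \<forall>i\<le>length u. length (wnd (take i u)) \<le> n}.
                       enat (space A u))"

text \<open>States are
  taken to be bit strings; this loses no generality since the encoding of any algorithm is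
  injective, so states may be identified with their encodings.\<close>
definition V :: "nat set \<Rightarrow> nat list set \<Rightarrow> nat \<Rightarrow> enat" where
  "V \<Sigma> L n = (INF A \<in> {A :: bool list stream_alg. is_sw_alg \<Sigma> L A}. v_space \<Sigma> A n)"

end

theory Submission
  imports Defs
begin

text \<open>Let B = A^RD and read the window x backwards in B from a state P. The run passes through a
  chain of strongly connected components; since B is well-behaved, whether it accepts after t
  steps depends only on the component it is in and the time since entering it, so the entry times
  of the components determine all these acceptance bits. By duality, the bit at time |x| - k says
  whether the suffix of x of length |x| - k leads A into P. Storing, for the states P of a small
  set G and all states Q of B, the time at which the run from P enters Q therefore determines the
  window up to an equivalence that is a congruence for appending and expiring letters and
  saturates L. This needs (|G| \<cdot> |B| + 1)(log n + O(1)) bits with |B| \<le> 2^m, and G can be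
  chosen with at most as many elements as there are reachable state sets of A: m for a DFA,
  2^m for an NFA.\<close>

lemma take_in_lists [simp]: "x \<in> lists \<Sigma> \<Longrightarrow> take k x \<in> lists \<Sigma>"
  by (metis append_in_lists_conv append_take_drop_id)

lemma drop_in_lists [simp]: "x \<in> lists \<Sigma> \<Longrightarrow> drop k x \<in> lists \<Sigma>"
  by (metis append_in_lists_conv append_take_drop_id)

lemma rev_in_lists_iff [simp]: "rev x \<in> lists \<Sigma> \<longleftrightarrow> x \<in> lists \<Sigma>"
  by (simp add: in_lists_conv_set)

lemma steps_Nil [simp]: "steps A S [] = S"
  by (simp add: steps_def)

lemma steps_Cons [simp]: "steps A S (a # u) = steps A (step_set A S a) u"
  by (simp add: steps_def)

lemma steps_append: "steps A S (u @ v) = steps A (steps A S u) v"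
  by (simp add: steps_def)

lemma steps_snoc: "steps A S (u @ [a]) = step_set A (steps A S u) a"
  by (simp add: steps_def)

lemma step_set_subset_states:
  "is_nfa \<Sigma> A \<Longrightarrow> S \<subseteq> states A \<Longrightarrow> a \<in> \<Sigma> \<Longrightarrow> step_set A S a \<subseteq> states A"
  unfolding is_nfa_def step_set_def by blast

lemma steps_subset_states:
  assumes "is_nfa \<Sigma> A" "S \<subseteq> states A" "u \<in> lists \<Sigma>"
  shows "steps A S u \<subseteq> states A"
  using assms(3,2)
  by (induction u arbitrary: S) (simp_all add: step_set_subset_states[OF assms(1)])

lemma steps_rev_nfa_subset_states: "steps (rev_nfa A) S u \<subseteq> states A \<union> S"
  by (induction u arbitrary: S) (fastforce simp: step_set_def rev_nfa_def)+

lemma steps_meets_iff_rev_steps_meets: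
  assumes "is_nfa \<Sigma> A" "S \<subseteq> states A" "w \<in> lists \<Sigma>"
  shows "steps A S w \<inter> P \<noteq> {} \<longleftrightarrow> S \<inter> steps (rev_nfa A) P (rev w) \<noteq> {}"
  using assms(3,2)
proof (induction w arbitrary: S)
  case (Cons a w)
  have "steps A S (a # w) \<inter> P \<noteq> {} \<longleftrightarrow> step_set A S a \<inter> steps (rev_nfa A) P (rev w) \<noteq> {}"
    using Cons step_set_subset_states[OF assms(1)] by simp
  also have "\<dots> \<longleftrightarrow> S \<inter> step_set (rev_nfa A) (steps (rev_nfa A) P (rev w)) a \<noteq> {}"
    using Cons.prems by (auto simp: step_set_def rev_nfa_def)
  finally show ?case by (simp add: steps_snoc)
qed simp

lemma dreach_append: "dreach D q (u @ v) = dreach D (dreach D q u) v"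
  by (simp add: dreach_def)

lemma dreach_rd: "dreach (rd \<Sigma> A) P u = steps (rev_nfa A) P u"
  by (simp add: dreach_def steps_def rd_def)

lemma dstates_rd: "dstates (rd \<Sigma> A) = {steps (rev_nfa A) (final A) u | u. u \<in> lists \<Sigma>}"
  by (simp add: rd_def rev_nfa_def)

lemma dinit_rd: "dinit (rd \<Sigma> A) = final A"
  by (simp add: rd_def rev_nfa_def)

lemma dfinal_rd: "dfinal (rd \<Sigma> A) = {S \<in> dstates (rd \<Sigma> A). S \<inter> init A \<noteq> {}}"
  by (simp add: rd_def rev_nfa_def)

lemma final_in_dstates_rd: "final A \<in> dstates (rd \<Sigma> A)"
  by (auto simp: dstates_rd intro!: exI[of _ "[]"])

lemma dreach_rd_in_dstates:
  assumes "P \<in> dstates (rd \<Sigma> A)" "u \<in> lists \<Sigma>"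
  shows "dreach (rd \<Sigma> A) P u \<in> dstates (rd \<Sigma> A)"
proof -
  obtain v where "v \<in> lists \<Sigma>" "P = steps (rev_nfa A) (final A) v"
    using assms(1) by (auto simp: dstates_rd)
  then show ?thesis
    using assms(2) unfolding dstates_rd dreach_rd
    by (intro CollectI exI[of _ "v @ u"]) (simp add: steps_append)
qed

lemma reach_dinit_rd: "Q \<in> dstates (rd \<Sigma> A) \<Longrightarrow> reach \<Sigma> (rd \<Sigma> A) (dinit (rd \<Sigma> A)) Q"
  by (auto simp: dstates_rd dinit_rd reach_def dreach_rd)

lemma dstates_rd_subset_Pow: "is_nfa \<Sigma> A \<Longrightarrow> dstates (rd \<Sigma> A) \<subseteq> Pow (states A)"
  using steps_rev_nfa_subset_states[of A "final A"] by (fastforce simp: dstates_rd is_nfa_def)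

lemma finite_dstates_rd: "is_nfa \<Sigma> A \<Longrightarrow> finite (dstates (rd \<Sigma> A))"
  by (meson dstates_rd_subset_Pow finite_Pow_iff finite_subset is_nfa_def)

lemma card_dstates_rd_le: "is_nfa \<Sigma> A \<Longrightarrow> card (dstates (rd \<Sigma> A)) \<le> 2 ^ card (states A)"
  by (metis card_Pow card_mono dstates_rd_subset_Pow finite_Pow_iff is_nfa_def)

lemma dfa_steps_singleton:
  assumes "is_dfa \<Sigma> A" "w \<in> lists \<Sigma>"
  shows "\<exists>q\<in>states A. steps A (init A) w = {q}"
  using assms(2)
proof (induction w rule: rev_induct)
  case Nil
  then show ?case
    using assms(1) by (auto simp: is_dfa_def is_nfa_def card_1_singleton_iff)
next
  case (snoc a w)
  then obtain q where q: "q \<in> states A" "steps A (init A) w = {q}"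
    by auto
  then have "card (trans A q a) = 1" "trans A q a \<subseteq> states A"
    using assms(1) snoc.prems by (auto simp: is_dfa_def is_nfa_def)
  then show ?case
    using q(2) by (auto simp: steps_snoc step_set_def card_1_singleton_iff)
qed

section \<open>Entry times into strongly connected components\<close>

lemma reach_refl: "reach \<Sigma> D p p"
  by (auto simp: reach_def dreach_def intro!: bexI[of _ "[]"])

lemma reach_trans: "reach \<Sigma> D p q \<Longrightarrow> reach \<Sigma> D q r \<Longrightarrow> reach \<Sigma> D p r"
  unfolding reach_def by (metis append_in_lists_conv dreach_append)

definition drun :: "'s dfa \<Rightarrow> 's \<Rightarrow> nat list \<Rightarrow> nat \<Rightarrow> 's" where
  "drun D P r t = dreach D P (take t r)"

definition scc_entry :: "nat set \<Rightarrow> 's dfa \<Rightarrow> 's \<Rightarrow> nat list \<Rightarrow> nat \<Rightarrow> bool" where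
  "scc_entry \<Sigma> D P r t \<longleftrightarrow>
     t = 0 \<or> (\<exists>s. t = Suc s \<and> \<not> reach \<Sigma> D (drun D P r (Suc s)) (drun D P r s))"

definition entry_time :: "nat set \<Rightarrow> 's dfa \<Rightarrow> 's \<Rightarrow> nat list \<Rightarrow> 's \<Rightarrow> nat option" where
  "entry_time \<Sigma> D P r Q =
     (if \<exists>t\<le>length r. scc_entry \<Sigma> D P r t \<and> drun D P r t = Q
      then Some (LEAST t. t \<le> length r \<and> scc_entry \<Sigma> D P r t \<and> drun D P r t = Q) else None)"

lemma drun_0 [simp]: "drun D P r 0 = P"
  by (simp add: drun_def dreach_def)

lemma dreach_drun:
  assumes "s \<le> t"
  shows "dreach D (drun D P r s) (drop s (take t r)) = drun D P r t"
proof -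
  have "take s r @ drop s (take t r) = take t r"
    using assms by (metis append_take_drop_id min.absorb1 take_take)
  then show ?thesis
    unfolding drun_def by (metis dreach_append)
qed

lemma reach_drun: "r \<in> lists \<Sigma> \<Longrightarrow> s \<le> t \<Longrightarrow> reach \<Sigma> D (drun D P r s) (drun D P r t)"
  unfolding reach_def by (metis dreach_drun drop_in_lists take_in_lists)

lemma scc_entry_unique:
  assumes r: "r \<in> lists \<Sigma>" and "scc_entry \<Sigma> D P r t1" "scc_entry \<Sigma> D P r t2"
    and "drun D P r t1 = drun D P r t2"
  shows "t1 = t2"
proof -
  have earlier_impossible: False if ab: "a < b" "scc_entry \<Sigma> D P r b" "drun D P r a = drun D P r b" for a b
  proof -
    obtain s where s: "b = Suc s" "\<not> reach \<Sigma> D (drun D P r (Suc s)) (drun D P r s)"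
      using ab(1,2) unfolding scc_entry_def by auto
    have "reach \<Sigma> D (drun D P r a) (drun D P r s)"
      using ab(1) s(1) by (intro reach_drun[OF r]) simp
    then show False
      using s ab(3) by simp
  qed
  then show ?thesis
    using earlier_impossible[of t1 t2] earlier_impossible[of t2 t1] assms(2-4)
    by (cases t1 t2 rule: linorder_cases) auto
qed

lemma entry_time_eq_Some_iff:
  assumes "r \<in> lists \<Sigma>"
  shows "entry_time \<Sigma> D P r Q = Some t \<longleftrightarrow>
           t \<le> length r \<and> scc_entry \<Sigma> D P r t \<and> drun D P r t = Q"
proof -
  have "(LEAST t. t \<le> length r \<and> scc_entry \<Sigma> D P r t \<and> drun D P r t = Q) = t"
    if "t \<le> length r \<and> scc_entry \<Sigma> D P r t \<and> drun D P r t = Q" for t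
  proof (rule Least_equality)
    fix t' assume "t' \<le> length r \<and> scc_entry \<Sigma> D P r t' \<and> drun D P r t' = Q"
    then show "t \<le> t'"
      using that scc_entry_unique[OF assms, of D P t t'] by simp
  qed (rule that)
  then show ?thesis
    unfolding entry_time_def by auto
qed

lemma exists_last_scc_entry:
  "\<exists>t0\<le>t. scc_entry \<Sigma> D P r t0 \<and> (\<forall>s. t0 < s \<and> s \<le> t \<longrightarrow> \<not> scc_entry \<Sigma> D P r s)"
proof (induction t)
  case 0
  then show ?case by (auto simp: scc_entry_def)
next
  case (Suc t)
  then obtain t0 where "t0 \<le> t" "scc_entry \<Sigma> D P r t0"
      "\<forall>s. t0 < s \<and> s \<le> t \<longrightarrow> \<not> scc_entry \<Sigma> D P r s"
    by blast
  then show ?case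
    by (cases "scc_entry \<Sigma> D P r (Suc t)") (auto simp: le_Suc_eq intro: exI[of _ t0])
qed

lemma reach_back_to_last_scc_entry:
  assumes "r \<in> lists \<Sigma>" "t0 \<le> t" "\<forall>s. t0 < s \<and> s \<le> t \<longrightarrow> \<not> scc_entry \<Sigma> D P r s"
  shows "reach \<Sigma> D (drun D P r t) (drun D P r t0)"
  using assms(2,3)
proof (induction t)
  case (Suc t)
  show ?case
  proof (cases "t0 = Suc t")
    case False
    then have "\<not> scc_entry \<Sigma> D P r (Suc t)"
      using Suc.prems by simp
    then have "reach \<Sigma> D (drun D P r (Suc t)) (drun D P r t)"
      by (simp add: scc_entry_def)
    moreover have "reach \<Sigma> D (drun D P r t) (drun D P r t0)"
      using Suc False by simp
    ultimately show ?thesis by (rule reach_trans)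
  qed (simp add: reach_refl)
qed (simp add: reach_refl)

lemma scc_entry_transfer:
  assumes "r \<in> lists \<Sigma>" "r' \<in> lists \<Sigma>" "entry_time \<Sigma> D P r = entry_time \<Sigma> D P r'"
    and "scc_entry \<Sigma> D P r s" "s \<le> length r"
  shows "scc_entry \<Sigma> D P r' s"
proof -
  have "entry_time \<Sigma> D P r (drun D P r s) = Some s"
    using assms(4,5) by (subst entry_time_eq_Some_iff[OF assms(1)]) simp
  then have "entry_time \<Sigma> D P r' (drun D P r s) = Some s"
    by (simp add: assms(3))
  then show ?thesis
    by (subst (asm) entry_time_eq_Some_iff[OF assms(2)]) simp
qed

lemma well_behavedD:
  assumes "well_behaved \<Sigma> D" "reach \<Sigma> D (dinit D) q"
    and "u \<in> lists \<Sigma>" "v \<in> lists \<Sigma>" "length u = length v"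
    and "dreach D q u \<in> scc \<Sigma> D q" "dreach D q v \<in> scc \<Sigma> D q"
  shows "dreach D q u \<in> dfinal D \<longleftrightarrow> dreach D q v \<in> dfinal D"
proof -
  have "\<forall>q'\<in>scc \<Sigma> D q. \<forall>u\<in>lists \<Sigma>. \<forall>v\<in>lists \<Sigma>.
          length u = length v \<and> dreach D q' u \<in> scc \<Sigma> D q \<and> dreach D q' v \<in> scc \<Sigma> D q \<longrightarrow>
          (dreach D q' u \<in> dfinal D \<longleftrightarrow> dreach D q' v \<in> dfinal D)"
    using assms(1) unfolding well_behaved_def by (rule allE) (use assms(2) in blast)
  moreover have "q \<in> scc \<Sigma> D q"
    by (simp add: scc_def reach_refl)
  ultimately show ?thesis
    using assms(3-7) by blast
qed

text \<open>At time t both runs are inside the SCC entered last, at the same distance from its entry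
  state, so well-behavedness applies.\<close>
lemma entry_time_determines_acceptance:
  assumes wb: "well_behaved \<Sigma> D" and P: "reach \<Sigma> D (dinit D) P"
    and r: "r \<in> lists \<Sigma>" and r': "r' \<in> lists \<Sigma>" and len: "length r = length r'"
    and same: "entry_time \<Sigma> D P r = entry_time \<Sigma> D P r'" and t: "t \<le> length r"
  shows "drun D P r t \<in> dfinal D \<longleftrightarrow> drun D P r' t \<in> dfinal D"
proof -
  obtain t0 where t0: "t0 \<le> t" "scc_entry \<Sigma> D P r t0"
      and no_entry: "\<forall>s. t0 < s \<and> s \<le> t \<longrightarrow> \<not> scc_entry \<Sigma> D P r s"
    using exists_last_scc_entry[of t \<Sigma> D P r] by blast
  define Q where "Q = drun D P r t0"
  have "entry_time \<Sigma> D P r Q = Some t0"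
    using t0 t unfolding Q_def by (subst entry_time_eq_Some_iff[OF r]) simp
  then have "entry_time \<Sigma> D P r' Q = Some t0"
    by (simp add: same)
  then have Q': "drun D P r' t0 = Q"
    by (subst (asm) entry_time_eq_Some_iff[OF r']) simp
  have no_entry': "\<forall>s. t0 < s \<and> s \<le> t \<longrightarrow> \<not> scc_entry \<Sigma> D P r' s"
  proof (intro allI impI notI)
    fix s assume s: "t0 < s \<and> s \<le> t" and "scc_entry \<Sigma> D P r' s"
    then have "scc_entry \<Sigma> D P r s"
      using scc_entry_transfer[OF r' r same[symmetric]] len t by simp
    then show False
      using no_entry s by blast
  qed
  have "reach \<Sigma> D P Q"
    using reach_drun[OF r le0, of D P t0] by (simp add: Q_def)
  with P have "reach \<Sigma> D (dinit D) Q"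
    by (rule reach_trans)
  moreover have "dreach D Q (drop t0 (take t r)) \<in> scc \<Sigma> D Q"
    using dreach_drun[OF t0(1), of D P r] reach_drun[OF r t0(1), of D P]
      reach_back_to_last_scc_entry[OF r t0(1) no_entry] by (simp add: scc_def Q_def)
  moreover have "dreach D Q (drop t0 (take t r')) \<in> scc \<Sigma> D Q"
    using dreach_drun[OF t0(1), of D P r'] reach_drun[OF r' t0(1), of D P]
      reach_back_to_last_scc_entry[OF r' t0(1) no_entry'] by (simp add: scc_def Q')
  ultimately have "dreach D Q (drop t0 (take t r)) \<in> dfinal D \<longleftrightarrow>
                   dreach D Q (drop t0 (take t r')) \<in> dfinal D"
    using len t by (intro well_behavedD[OF wb]) (simp_all add: r r')
  then show ?thesis
    using dreach_drun[OF t0(1), of D P r] dreach_drun[OF t0(1), of D P r'] Q_def Q' by simp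
qed

definition bits_of_width :: "nat \<Rightarrow> nat \<Rightarrow> bool list" where
  "bits_of_width w k = map (bit k) [0..<w]"

lemma length_bits_of_width [simp]: "length (bits_of_width w k) = w"
  by (simp add: bits_of_width_def)

lemma bits_of_width_inj:
  assumes "k1 < 2 ^ w" "k2 < 2 ^ w" "bits_of_width w k1 = bits_of_width w k2"
  shows "k1 = k2"
proof -
  have "\<forall>i<w. bit k1 i = bit k2 i"
    using assms(3) by (simp add: bits_of_width_def map_eq_conv)
  then have "take_bit w k1 = take_bit w k2"
    by (intro bit_eqI) (auto simp: bit_take_bit_iff)
  then show ?thesis
    using assms(1,2) by (simp add: take_bit_nat_eq_self)
qed

lemma length_concat_bits_of_width: "length (concat (map (bits_of_width w) xs)) = length xs * w"
  by (induction xs) auto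

lemma concat_bits_of_width_inj:
  "\<forall>k\<in>set xs. k < 2 ^ w \<Longrightarrow> \<forall>k\<in>set ys. k < 2 ^ w \<Longrightarrow> length xs = length ys \<Longrightarrow>
   concat (map (bits_of_width w) xs) = concat (map (bits_of_width w) ys) \<Longrightarrow> xs = ys"
proof (induction xs arbitrary: ys)
  case (Cons a xs)
  then obtain b ys' where ys: "ys = b # ys'"
    by (cases ys) auto
  with Cons.prems(4) have "bits_of_width w a = bits_of_width w b"
      and "concat (map (bits_of_width w) xs) = concat (map (bits_of_width w) ys')"
    by (simp_all add: append_eq_append_conv)
  moreover have "a < 2 ^ w" "b < 2 ^ w" "\<forall>k\<in>set xs. k < 2 ^ w" "\<forall>k\<in>set ys'. k < 2 ^ w"
      "length xs = length ys'"
    using Cons.prems ys by simp_all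
  ultimately show ?case
    using Cons.IH bits_of_width_inj ys by blast
qed simp

section \<open>Separating subsets\<close>

lemma separating_subset_insert:
  assumes "G \<subseteq> G'"
    and "\<forall>x1\<in>X. \<forall>x2\<in>X. (\<forall>P\<in>G. h x1 P = h x2 P) \<longrightarrow> (\<forall>P\<in>R. h x1 P = h x2 P)"
    and "\<forall>x'\<in>X. (\<forall>P\<in>G'. h x P = h x' P) \<longrightarrow> (\<forall>P\<in>R. h x P = h x' P)"
  shows "\<forall>x1\<in>insert x X. \<forall>x2\<in>insert x X. (\<forall>P\<in>G'. h x1 P = h x2 P) \<longrightarrow> (\<forall>P\<in>R. h x1 P = h x2 P)"
proof (intro ballI impI)
  fix x1 x2 P
  assume x12: "x1 \<in> insert x X" "x2 \<in> insert x X"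
    and agree: "\<forall>P\<in>G'. h x1 P = h x2 P" and P: "P \<in> R"
  from x12 consider "x1 = x2" | "x1 = x" "x2 \<in> X" | "x1 \<in> X" "x2 = x" | "x1 \<in> X" "x2 \<in> X"
    by blast
  then show "h x1 P = h x2 P"
  proof cases
    case 1
    then show ?thesis by simp
  next
    case 2
    then have "\<forall>P\<in>G'. h x P = h x2 P"
      using agree by simp
    then show ?thesis
      using assms(3) 2 P by blast
  next
    case 3
    then have "\<forall>P\<in>G'. h x P = h x1 P"
      using agree by simp
    then have "h x P = h x1 P"
      using assms(3) 3 P by blast
    then show ?thesis
      using 3 by simp
  next
    case 4
    have "\<forall>P\<in>G. h x1 P = h x2 P"
      using assms(1) agree by blast
    then show ?thesis
      using assms(2) 4 P by blast
  qed
qed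

text \<open>Each point of X needs at most one new test to be told apart from the earlier ones.\<close>
lemma exists_small_separating_subset:
  assumes "finite X"
  shows "\<exists>G\<subseteq>R. finite G \<and> card G \<le> card X \<and>
    (\<forall>x1\<in>X. \<forall>x2\<in>X. (\<forall>P\<in>G. h x1 P = h x2 P) \<longrightarrow> (\<forall>P\<in>R. h x1 P = h x2 P))"
  using assms
proof (induction X rule: finite_induct)
  case empty
  show ?case
    by (intro exI[of _ "{}"]) simp
next
  case (insert x X)
  from insert.IH obtain G where G: "G \<subseteq> R" "finite G" "card G \<le> card X"
      and sep: "\<forall>x1\<in>X. \<forall>x2\<in>X. (\<forall>P\<in>G. h x1 P = h x2 P) \<longrightarrow> (\<forall>P\<in>R. h x1 P = h x2 P)"
    by auto
  show ?case
  proof (cases "\<exists>q\<in>X. (\<forall>P\<in>G. h x P = h q P) \<and> \<not> (\<forall>P\<in>R. h x P = h q P)")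
    case True
    then obtain q P1 where q: "q \<in> X" "\<forall>P\<in>G. h x P = h q P" "P1 \<in> R" "h x P1 \<noteq> h q P1"
      by blast
    have no_match: "\<not> (\<forall>P\<in>insert P1 G. h x P = h x' P)" if x': "x' \<in> X" for x'
    proof
      assume agree: "\<forall>P\<in>insert P1 G. h x P = h x' P"
      then have "\<forall>P\<in>G. h x' P = h q P"
        using q(2) by (metis insertCI)
      then have "h x' P1 = h q P1"
        using sep x' q(1,3) by blast
      moreover have "h x P1 = h x' P1"
        using agree by simp
      ultimately show False
        using q(4) by simp
    qed
    then have x_separated: "\<forall>x'\<in>X. (\<forall>P\<in>insert P1 G. h x P = h x' P) \<longrightarrow> (\<forall>P\<in>R. h x P = h x' P)"
      by blast
    have "\<forall>x1\<in>insert x X. \<forall>x2\<in>insert x X.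
        (\<forall>P\<in>insert P1 G. h x1 P = h x2 P) \<longrightarrow> (\<forall>P\<in>R. h x1 P = h x2 P)"
      by (rule separating_subset_insert[OF _ sep x_separated]) blast
    moreover have "card (insert P1 G) \<le> card (insert x X)"
      using G insert.hyps by (simp add: card_insert_if)
    moreover have "insert P1 G \<subseteq> R" "finite (insert P1 G)"
      using G q(3) by simp_all
    ultimately show ?thesis
      by blast
  next
    case False
    then have x_separated: "\<forall>x'\<in>X. (\<forall>P\<in>G. h x P = h x' P) \<longrightarrow> (\<forall>P\<in>R. h x P = h x' P)"
      by blast
    have "\<forall>x1\<in>insert x X. \<forall>x2\<in>insert x X.
        (\<forall>P\<in>G. h x1 P = h x2 P) \<longrightarrow> (\<forall>P\<in>R. h x1 P = h x2 P)"
      by (rule separating_subset_insert[OF _ sep x_separated]) blast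
    moreover have "card G \<le> card (insert x X)"
      using G insert.hyps by simp
    ultimately show ?thesis
      using G(1,2) by blast
  qed
qed

section \<open>Sliding-window algorithms from window congruences\<close>

lemma wnd_snoc: "wnd (w @ [a]) = wstep a (wnd w)"
  by (simp add: wnd_def)

lemma srun_snoc: "srun S (w @ [a]) = sstep S (srun S w) a"
  by (simp add: srun_def)

locale window_code =
  fixes \<Sigma> :: "nat set" and L :: "nat list set" and code :: "nat list \<Rightarrow> bool list"
  assumes code_congruent: "\<And>x y. x \<in> lists \<Sigma> \<Longrightarrow> y \<in> lists \<Sigma> \<Longrightarrow> code x = code y \<Longrightarrow>
    (\<forall>b\<in>\<Sigma>. code (x @ [b]) = code (y @ [b])) \<and> code (tl x) = code (tl y) \<and> (x \<in> L \<longleftrightarrow> y \<in> L)"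
begin

definition decode :: "bool list \<Rightarrow> nat list" where
  "decode s = (SOME x. x \<in> lists \<Sigma> \<and> code x = s)"

definition alg :: "bool list stream_alg" where
  "alg = \<lparr>sinit = code [],
          sstep = (\<lambda>s a. case a of Some b \<Rightarrow> code (decode s @ [b]) | None \<Rightarrow> code (tl (decode s))),
          sacc = code ` (L \<inter> lists \<Sigma>), senc = id\<rparr>"

lemma decode_code: "x \<in> lists \<Sigma> \<Longrightarrow> decode (code x) \<in> lists \<Sigma> \<and> code (decode (code x)) = code x"
  unfolding decode_def by (rule someI[of _ x]) simp

lemma srun_alg: "w \<in> lists (ext_alph \<Sigma>) \<Longrightarrow> wnd w \<in> lists \<Sigma> \<and> srun alg w = code (wnd w)"
proof (induction w rule: rev_induct)
  case Nil
  show ?case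
    by (simp add: wnd_def srun_def alg_def)
next
  case (snoc a w)
  then have x: "wnd w \<in> lists \<Sigma>" and run: "srun alg w = code (wnd w)"
    by auto
  have congruent: "(\<forall>b\<in>\<Sigma>. code (decode (code (wnd w)) @ [b]) = code (wnd w @ [b])) \<and>
      code (tl (decode (code (wnd w)))) = code (tl (wnd w))"
    using code_congruent decode_code[OF x] x by blast
  show ?case
  proof (cases a)
    case None
    have "tl (wnd w) \<in> lists \<Sigma>"
      using x by (cases "wnd w") auto
    then show ?thesis
      using None run congruent by (simp add: wnd_snoc srun_snoc alg_def)
  next
    case (Some b)
    then have "b \<in> \<Sigma>"
      using snoc.prems by (auto simp: ext_alph_def)
    then show ?thesis
      using Some x run congruent by (simp add: wnd_snoc srun_snoc alg_def)
  qed
qed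

lemma is_sw_alg_alg: "is_sw_alg \<Sigma> L alg"
  unfolding is_sw_alg_def
proof (intro conjI ballI)
  show "inj (senc alg)"
    by (simp add: alg_def)
next
  fix w
  assume "w \<in> lists (ext_alph \<Sigma>)"
  then have x: "wnd w \<in> lists \<Sigma>" and run: "srun alg w = code (wnd w)"
    using srun_alg by auto
  have "code (wnd w) \<in> code ` (L \<inter> lists \<Sigma>) \<longleftrightarrow> wnd w \<in> L"
    using code_congruent[OF x] x by blast
  then show "srun alg w \<in> sacc alg \<longleftrightarrow> wnd w \<in> L"
    unfolding run by (simp add: alg_def)
qed

lemma V_le:
  assumes "\<forall>x\<in>lists \<Sigma>. length x \<le> n \<longrightarrow> length (code x) \<le> B"
  shows "V \<Sigma> L n \<le> enat B"
proof -
  have "space alg u \<le> B"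
    if u: "u \<in> lists (ext_alph \<Sigma>)" and n: "\<forall>i\<le>length u. length (wnd (take i u)) \<le> n" for u
  proof -
    have "length (senc alg (srun alg (take i u))) \<le> B" if "i \<le> length u" for i
    proof -
      have "take i u \<in> lists (ext_alph \<Sigma>)"
        using u by simp
      then show ?thesis
        using srun_alg assms n that by (simp add: alg_def)
    qed
    then show ?thesis
      unfolding space_def by (intro Max.boundedI) auto
  qed
  then have "v_space \<Sigma> alg n \<le> enat B"
    unfolding v_space_def by (intro SUP_least) simp
  then show ?thesis
    unfolding V_def using is_sw_alg_alg by (intro INF_lower2) simp_all
qed

end

section \<open>Coding windows by entry times\<close>

text \<open>Each state of A^RD is the set of states of A from which one fixed word is accepted, so two
  words are equivalent iff corresponding suffixes lead A to states with the same futures.\<close>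
definition suffix_equiv :: "nat set \<Rightarrow> nfa \<Rightarrow> nat list \<Rightarrow> nat list \<Rightarrow> bool" where
  "suffix_equiv \<Sigma> A x y \<longleftrightarrow> length x = length y \<and>
     (\<forall>k\<le>length x. \<forall>P\<in>dstates (rd \<Sigma> A).
        steps A (init A) (drop k x) \<inter> P \<noteq> {} \<longleftrightarrow> steps A (init A) (drop k y) \<inter> P \<noteq> {})"

lemma suffix_equiv_refl: "suffix_equiv \<Sigma> A x x"
  by (simp add: suffix_equiv_def)

lemma suffix_equiv_sym: "suffix_equiv \<Sigma> A x y \<Longrightarrow> suffix_equiv \<Sigma> A y x"
  by (simp add: suffix_equiv_def)

lemma suffix_equiv_trans:
  "suffix_equiv \<Sigma> A x y \<Longrightarrow> suffix_equiv \<Sigma> A y z \<Longrightarrow> suffix_equiv \<Sigma> A x z"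
  by (simp add: suffix_equiv_def)

lemma suffix_equiv_snoc:
  assumes nfa: "is_nfa \<Sigma> A" and x: "x \<in> lists \<Sigma>" and y: "y \<in> lists \<Sigma>" and a: "a \<in> \<Sigma>"
    and equiv: "suffix_equiv \<Sigma> A x y"
  shows "suffix_equiv \<Sigma> A (x @ [a]) (y @ [a])"
proof -
  have len: "length x = length y"
    using equiv by (simp add: suffix_equiv_def)
  have "steps A (init A) (drop k x @ [a]) \<inter> P \<noteq> {} \<longleftrightarrow>
        steps A (init A) (drop k y @ [a]) \<inter> P \<noteq> {}"
    if k: "k \<le> length x" and P: "P \<in> dstates (rd \<Sigma> A)" for k P
  proof -
    have init: "init A \<subseteq> states A"
      using nfa by (simp add: is_nfa_def)
    have "steps A (init A) (drop k x) \<inter> steps (rev_nfa A) P [a] \<noteq> {} \<longleftrightarrow>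
          steps A (init A) (drop k y) \<inter> steps (rev_nfa A) P [a] \<noteq> {}"
      using equiv k dreach_rd_in_dstates[OF P, of "[a]"] a unfolding suffix_equiv_def dreach_rd
      by simp
    moreover have "drop k x \<in> lists \<Sigma>" "drop k y \<in> lists \<Sigma>"
      using x y by simp_all
    ultimately show ?thesis
      unfolding steps_append[of A "init A"]
      using steps_meets_iff_rev_steps_meets[OF nfa steps_subset_states[OF nfa init], of _ "[a]"] a
      by simp
  qed
  then show ?thesis
    using len by (auto simp: suffix_equiv_def le_Suc_eq)
qed

lemma suffix_equiv_tl:
  assumes "suffix_equiv \<Sigma> A x y"
  shows "suffix_equiv \<Sigma> A (tl x) (tl y)"
proof -
  have len: "length x = length y"
    using assms by (simp add: suffix_equiv_def)
  have "steps A (init A) (drop (Suc k) x) \<inter> P \<noteq> {} \<longleftrightarrow> steps A (init A) (drop (Suc k) y) \<inter> P \<noteq> {}"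
    if "k \<le> length (tl x)" "P \<in> dstates (rd \<Sigma> A)" for k P
  proof (cases "x = []")
    case False
    then have "Suc k \<le> length x"
      using that(1) by (cases x) simp_all
    then show ?thesis
      using assms that(2) unfolding suffix_equiv_def by blast
  qed (use len in simp)
  then show ?thesis
    using len by (simp add: suffix_equiv_def drop_Suc)
qed

lemma suffix_equiv_lang:
  assumes "x \<in> lists \<Sigma>" "y \<in> lists \<Sigma>" "suffix_equiv \<Sigma> A x y"
  shows "x \<in> lang \<Sigma> A \<longleftrightarrow> y \<in> lang \<Sigma> A"
  using assms(3)[unfolded suffix_equiv_def, THEN conjunct2, rule_format, OF le0 final_in_dstates_rd]
    assms(1,2) by (simp add: lang_def)

definition suffix_canon :: "nat set \<Rightarrow> nfa \<Rightarrow> nat list \<Rightarrow> nat list" where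
  "suffix_canon \<Sigma> A x = (SOME y. y \<in> lists \<Sigma> \<and> suffix_equiv \<Sigma> A y x)"

lemma suffix_canon_equiv:
  "x \<in> lists \<Sigma> \<Longrightarrow> suffix_canon \<Sigma> A x \<in> lists \<Sigma> \<and> suffix_equiv \<Sigma> A (suffix_canon \<Sigma> A x) x"
  unfolding suffix_canon_def by (rule someI[of _ x]) (simp add: suffix_equiv_refl)

lemma suffix_canon_cong:
  assumes "suffix_equiv \<Sigma> A x y"
  shows "suffix_canon \<Sigma> A x = suffix_canon \<Sigma> A y"
proof -
  have "(\<lambda>z. z \<in> lists \<Sigma> \<and> suffix_equiv \<Sigma> A z x) = (\<lambda>z. z \<in> lists \<Sigma> \<and> suffix_equiv \<Sigma> A z y)"
    using assms suffix_equiv_sym suffix_equiv_trans by blast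
  then show ?thesis
    by (simp add: suffix_canon_def)
qed

locale entry_profile_code =
  fixes \<Sigma> :: "nat set" and A :: nfa and gs ds :: "nat set list"
  assumes nfa: "is_nfa \<Sigma> A" and wb: "well_behaved \<Sigma> (rd \<Sigma> A)"
    and gs: "set gs \<subseteq> dstates (rd \<Sigma> A)" and ds: "set ds = dstates (rd \<Sigma> A)"
    and separating: "\<forall>w1\<in>lists \<Sigma>. \<forall>w2\<in>lists \<Sigma>.
      (\<forall>P\<in>set gs. steps A (init A) w1 \<inter> P \<noteq> {} \<longleftrightarrow> steps A (init A) w2 \<inter> P \<noteq> {}) \<longrightarrow>
      (\<forall>P\<in>dstates (rd \<Sigma> A). steps A (init A) w1 \<inter> P \<noteq> {} \<longleftrightarrow> steps A (init A) w2 \<inter> P \<noteq> {})"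
begin

text \<open>Entry time t is stored as Suc t, and 0 means that Q is never entered.\<close>
definition entry_profile :: "nat list \<Rightarrow> nat list" where
  "entry_profile x = length x #
     map (\<lambda>(P, Q). case_option 0 Suc (entry_time \<Sigma> (rd \<Sigma> A) P (rev x) Q)) (List.product gs ds)"

lemma length_entry_profile: "length (entry_profile x) = Suc (length gs * length ds)"
  by (simp add: entry_profile_def)

lemma entry_profile_le:
  assumes "x \<in> lists \<Sigma>" "e \<in> set (entry_profile x)"
  shows "e \<le> Suc (length x)"
proof -
  have "t \<le> length x" if "entry_time \<Sigma> (rd \<Sigma> A) P (rev x) Q = Some t" for P Q t
    using that entry_time_eq_Some_iff[of "rev x" \<Sigma> "rd \<Sigma> A" P Q t] assms(1) by simp
  then show ?thesis
    using assms(2) unfolding entry_profile_def by (auto split: option.splits)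
qed

lemma entry_time_rd_in_dstates:
  assumes "P \<in> dstates (rd \<Sigma> A)" "r \<in> lists \<Sigma>" "entry_time \<Sigma> (rd \<Sigma> A) P r Q = Some t"
  shows "Q \<in> dstates (rd \<Sigma> A)"
proof -
  have "drun (rd \<Sigma> A) P r t = Q"
    using assms(3) by (subst (asm) entry_time_eq_Some_iff[OF assms(2)]) simp
  moreover have "take t r \<in> lists \<Sigma>"
    using assms(2) by simp
  ultimately show ?thesis
    using dreach_rd_in_dstates[OF assms(1)] unfolding drun_def by blast
qed

lemma drun_rd_accepting_iff:
  assumes "P \<in> dstates (rd \<Sigma> A)" "x \<in> lists \<Sigma>" "k \<le> length x"
  shows "drun (rd \<Sigma> A) P (rev x) (length x - k) \<in> dfinal (rd \<Sigma> A) \<longleftrightarrow>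
         steps A (init A) (drop k x) \<inter> P \<noteq> {}"
proof -
  have x: "drop k x \<in> lists \<Sigma>" "rev (drop k x) \<in> lists \<Sigma>"
    using assms(2) by simp_all
  have run: "drun (rd \<Sigma> A) P (rev x) (length x - k) = steps (rev_nfa A) P (rev (drop k x))"
    by (simp add: drun_def rev_drop dreach_rd)
  have "init A \<subseteq> states A"
    using nfa by (simp add: is_nfa_def)
  then have "steps A (init A) (drop k x) \<inter> P \<noteq> {} \<longleftrightarrow>
             init A \<inter> steps (rev_nfa A) P (rev (drop k x)) \<noteq> {}"
    by (rule steps_meets_iff_rev_steps_meets[OF nfa _ x(1)])
  then show ?thesis
    using dreach_rd_in_dstates[OF assms(1) x(2)] unfolding run dfinal_rd dreach_rd by blast
qed

lemma same_entry_times_if_entry_profile_eq: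
  assumes x: "x \<in> lists \<Sigma>" and y: "y \<in> lists \<Sigma>" and eq: "entry_profile x = entry_profile y"
    and P: "P \<in> set gs"
  shows "entry_time \<Sigma> (rd \<Sigma> A) P (rev x) = entry_time \<Sigma> (rd \<Sigma> A) P (rev y)"
proof
  fix Q
  have P': "P \<in> dstates (rd \<Sigma> A)"
    using P gs by blast
  have rev: "rev x \<in> lists \<Sigma>" "rev y \<in> lists \<Sigma>"
    using x y by simp_all
  show "entry_time \<Sigma> (rd \<Sigma> A) P (rev x) Q = entry_time \<Sigma> (rd \<Sigma> A) P (rev y) Q"
  proof (cases "Q \<in> dstates (rd \<Sigma> A)")
    case True
    then have "(P, Q) \<in> set (List.product gs ds)"
      using P ds by simp
    then have "case_option 0 Suc (entry_time \<Sigma> (rd \<Sigma> A) P (rev x) Q) =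
               (case_option 0 Suc (entry_time \<Sigma> (rd \<Sigma> A) P (rev y) Q) :: nat)"
      using eq unfolding entry_profile_def by (auto simp: map_eq_conv)
    then show ?thesis
      by (auto split: option.splits)
  next
    case False
    then show ?thesis
      using entry_time_rd_in_dstates[OF P' rev(1)] entry_time_rd_in_dstates[OF P' rev(2)]
      by (metis not_None_eq)
  qed
qed

lemma suffix_equiv_if_entry_profile_eq:
  assumes x: "x \<in> lists \<Sigma>" and y: "y \<in> lists \<Sigma>" and eq: "entry_profile x = entry_profile y"
  shows "suffix_equiv \<Sigma> A x y"
proof -
  have len: "length x = length y"
    using eq by (simp add: entry_profile_def)
  have "\<forall>P\<in>dstates (rd \<Sigma> A). steps A (init A) (drop k x) \<inter> P \<noteq> {} \<longleftrightarrow>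
          steps A (init A) (drop k y) \<inter> P \<noteq> {}" if k: "k \<le> length x" for k
  proof -
    have agree_gs: "steps A (init A) (drop k x) \<inter> P \<noteq> {} \<longleftrightarrow> steps A (init A) (drop k y) \<inter> P \<noteq> {}"
      if P: "P \<in> set gs" for P
    proof -
      have P': "P \<in> dstates (rd \<Sigma> A)"
        using P gs by blast
      have "drun (rd \<Sigma> A) P (rev x) (length x - k) \<in> dfinal (rd \<Sigma> A) \<longleftrightarrow>
            drun (rd \<Sigma> A) P (rev y) (length x - k) \<in> dfinal (rd \<Sigma> A)"
        using x y len same_entry_times_if_entry_profile_eq[OF x y eq P]
        by (intro entry_time_determines_acceptance[OF wb reach_dinit_rd[OF P']])
          simp_all
      then show ?thesis
        using drun_rd_accepting_iff[OF P' x k] drun_rd_accepting_iff[OF P' y] k len by simp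
    qed
    have "drop k x \<in> lists \<Sigma>" "drop k y \<in> lists \<Sigma>"
      using x y by simp_all
    then show ?thesis
      by (rule mp[OF bspec[OF bspec[OF separating]]]) (use agree_gs in blast)
  qed
  then show ?thesis
    using len by (simp add: suffix_equiv_def)
qed

text \<open>Coding a canonical representative makes the code depend only on the equivalence class;
  entries are at most length x + 1, hence fit into floor_log (length x + 1) + 1 bits.\<close>
definition code :: "nat list \<Rightarrow> bool list" where
  "code x = concat (map (bits_of_width (Suc (floor_log (Suc (length x)))))
                       (entry_profile (suffix_canon \<Sigma> A x)))"

lemma length_code: "length (code x) = Suc (length gs * length ds) * Suc (floor_log (Suc (length x)))"
  by (simp add: code_def length_concat_bits_of_width length_entry_profile)

lemma entry_profile_suffix_canon_less:
  assumes "x \<in> lists \<Sigma>" "e \<in> set (entry_profile (suffix_canon \<Sigma> A x))"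
  shows "e < 2 ^ Suc (floor_log (Suc (length x)))"
proof -
  have "length (suffix_canon \<Sigma> A x) = length x"
    using suffix_canon_equiv[OF assms(1)] by (simp add: suffix_equiv_def)
  then have "e \<le> Suc (length x)"
    using entry_profile_le[OF _ assms(2)] suffix_canon_equiv[OF assms(1)] by simp
  then show ?thesis
    using floor_log_exp2_gt[of "Suc (length x)"] by simp
qed

lemma code_eq_iff:
  assumes x: "x \<in> lists \<Sigma>" and y: "y \<in> lists \<Sigma>"
  shows "code x = code y \<longleftrightarrow> suffix_equiv \<Sigma> A x y"
proof
  assume equiv: "suffix_equiv \<Sigma> A x y"
  then have "length x = length y"
    by (simp add: suffix_equiv_def)
  then show "code x = code y"
    using suffix_canon_cong[OF equiv] by (simp add: code_def)
next
  assume eq: "code x = code y"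
  then have "Suc (length gs * length ds) * Suc (floor_log (Suc (length x))) =
             Suc (length gs * length ds) * Suc (floor_log (Suc (length y)))"
    by (metis length_code)
  then have "floor_log (Suc (length x)) = floor_log (Suc (length y))"
    by (simp only: mult_cancel1 nat.inject) simp
  then have "entry_profile (suffix_canon \<Sigma> A x) = entry_profile (suffix_canon \<Sigma> A y)"
    using eq entry_profile_suffix_canon_less[OF x] entry_profile_suffix_canon_less[OF y]
    unfolding code_def by (intro concat_bits_of_width_inj) (simp_all add: length_entry_profile)
  then have "suffix_equiv \<Sigma> A (suffix_canon \<Sigma> A x) (suffix_canon \<Sigma> A y)"
    using suffix_canon_equiv[OF x] suffix_canon_equiv[OF y] by (intro suffix_equiv_if_entry_profile_eq) simp_all
  then show "suffix_equiv \<Sigma> A x y"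
    using suffix_canon_equiv[OF x] suffix_canon_equiv[OF y] by (meson suffix_equiv_sym suffix_equiv_trans)
qed

sublocale window_code \<Sigma> "lang \<Sigma> A" code
proof
  fix x y
  assume x: "x \<in> lists \<Sigma>" and y: "y \<in> lists \<Sigma>" and "code x = code y"
  then have equiv: "suffix_equiv \<Sigma> A x y"
    using code_eq_iff by simp
  have "code (x @ [b]) = code (y @ [b])" if "b \<in> \<Sigma>" for b
    using code_eq_iff x y that suffix_equiv_snoc[OF nfa x y that equiv] by simp
  moreover have "tl x \<in> lists \<Sigma>" "tl y \<in> lists \<Sigma>"
    using x y by (cases x; cases y; simp)+
  then have "code (tl x) = code (tl y)"
    using code_eq_iff suffix_equiv_tl[OF equiv] by simp
  ultimately show "(\<forall>b\<in>\<Sigma>. code (x @ [b]) = code (y @ [b])) \<and> code (tl x) = code (tl y) \<and>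
      (x \<in> lang \<Sigma> A \<longleftrightarrow> y \<in> lang \<Sigma> A)"
    using suffix_equiv_lang[OF x y equiv] by simp
qed

lemma V_lang_le: "V \<Sigma> (lang \<Sigma> A) n \<le> enat (Suc (length gs * length ds) * Suc (floor_log (Suc n)))"
proof (intro V_le ballI impI)
  fix x :: "nat list"
  assume "length x \<le> n"
  then have "Suc (floor_log (Suc (length x))) \<le> Suc (floor_log (Suc n))"
    by (simp add: floor_log_le_iff)
  then show "length (code x) \<le> Suc (length gs * length ds) * Suc (floor_log (Suc n))"
    unfolding length_code by (rule mult_le_mono2)
qed

end

lemma V_lang_le_reachable_sets:
  assumes nfa: "is_nfa \<Sigma> A" and wb: "well_behaved \<Sigma> (rd \<Sigma> A)" and X: "finite X"
    and reachable: "\<forall>w\<in>lists \<Sigma>. steps A (init A) w \<in> X"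
  shows "V \<Sigma> (lang \<Sigma> A) n \<le> enat (Suc (card X * card (dstates (rd \<Sigma> A))) * Suc (floor_log (Suc n)))"
proof -
  obtain ds where ds_enum: "set ds = dstates (rd \<Sigma> A)" "distinct ds"
    using finite_distinct_list[OF finite_dstates_rd[OF nfa]] by blast
  obtain G where G: "G \<subseteq> dstates (rd \<Sigma> A)" "finite G" "card G \<le> card X"
    and sep: "\<forall>S1\<in>X. \<forall>S2\<in>X. (\<forall>P\<in>G. S1 \<inter> P \<noteq> {} \<longleftrightarrow> S2 \<inter> P \<noteq> {}) \<longrightarrow>
        (\<forall>P\<in>dstates (rd \<Sigma> A). S1 \<inter> P \<noteq> {} \<longleftrightarrow> S2 \<inter> P \<noteq> {})"
    using exists_small_separating_subset[OF X, of "dstates (rd \<Sigma> A)" "\<lambda>S P. S \<inter> P \<noteq> {}"]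
    by auto
  obtain gs where gs_enum: "set gs = G" "distinct gs"
    using finite_distinct_list[OF G(2)] by blast
  interpret entry_profile_code \<Sigma> A gs ds
  proof
    show "\<forall>w1\<in>lists \<Sigma>. \<forall>w2\<in>lists \<Sigma>.
      (\<forall>P\<in>set gs. steps A (init A) w1 \<inter> P \<noteq> {} \<longleftrightarrow> steps A (init A) w2 \<inter> P \<noteq> {}) \<longrightarrow>
      (\<forall>P\<in>dstates (rd \<Sigma> A). steps A (init A) w1 \<inter> P \<noteq> {} \<longleftrightarrow> steps A (init A) w2 \<inter> P \<noteq> {})"
    proof (intro ballI impI)
      fix w1 w2 P
      assume "w1 \<in> lists \<Sigma>" "w2 \<in> lists \<Sigma>"
        and agree: "\<forall>P\<in>set gs. steps A (init A) w1 \<inter> P \<noteq> {} \<longleftrightarrow> steps A (init A) w2 \<inter> P \<noteq> {}"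
        and P: "P \<in> dstates (rd \<Sigma> A)"
      then have "steps A (init A) w1 \<in> X" "steps A (init A) w2 \<in> X"
        using reachable by simp_all
      then have "\<forall>P\<in>dstates (rd \<Sigma> A). steps A (init A) w1 \<inter> P \<noteq> {} \<longleftrightarrow> steps A (init A) w2 \<inter> P \<noteq> {}"
        by (rule mp[OF bspec[OF bspec[OF sep]]]) (use agree gs_enum(1) in simp)
      then show "steps A (init A) w1 \<inter> P \<noteq> {} \<longleftrightarrow> steps A (init A) w2 \<inter> P \<noteq> {}"
        using P by simp
    qed
  qed (use nfa wb G(1) gs_enum(1) ds_enum(1) in simp_all)
  have "length gs * length ds \<le> card X * card (dstates (rd \<Sigma> A))"
    using G(3) gs_enum ds_enum by (simp add: distinct_card[symmetric])
  then show ?thesis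
    using V_lang_le[of n] by (meson enat_ord_simps(1) le_SucI mult_le_mono1 order_trans Suc_le_mono)
qed

lemma eventually_V_le_log:
  assumes V: "\<And>n. V \<Sigma> L n \<le> enat (Suc E * Suc (floor_log (Suc n)))" and "E \<le> E'"
  shows "\<forall>\<^sub>F n in sequentially. \<exists>k. V \<Sigma> L n = enat k \<and>
           real k \<le> real (E' + 1) * real (floor_log n) + 2 * (real E' + 1)"
  unfolding eventually_sequentially
proof (rule exI[of _ 1], intro allI impI)
  fix n :: nat
  assume "1 \<le> n"
  then have "floor_log (Suc n) \<le> floor_log (2 * n)"
    by (intro floor_log_le_iff) simp
  also have "\<dots> = Suc (floor_log n)"
    using \<open>1 \<le> n\<close> by simp
  finally have "floor_log (Suc n) \<le> Suc (floor_log n)" .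
  then have "Suc E * Suc (floor_log (Suc n)) \<le> (E' + 1) * (floor_log n + 2)"
    using \<open>E \<le> E'\<close> by (intro mult_le_mono) simp_all
  moreover obtain k where k: "V \<Sigma> L n = enat k" "k \<le> Suc E * Suc (floor_log (Suc n))"
    using V[of n] by (cases "V \<Sigma> L n") simp_all
  ultimately have "real k \<le> real ((E' + 1) * (floor_log n + 2))"
    by linarith
  then show "\<exists>k. V \<Sigma> L n = enat k \<and> real k \<le> real (E' + 1) * real (floor_log n) + 2 * (real E' + 1)"
    using k(1) by (intro exI[of _ k]) (simp add: algebra_simps)
qed

lemma eventually_V_lang_le_log:
  assumes nfa: "is_nfa \<Sigma> A" and wb: "well_behaved \<Sigma> (rd \<Sigma> A)" and X: "finite X"
    and reachable: "\<forall>w\<in>lists \<Sigma>. steps A (init A) w \<in> X"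
    and E: "card X * 2 ^ card (states A) \<le> E"
  shows "\<forall>\<^sub>F n in sequentially. \<exists>k. V \<Sigma> (lang \<Sigma> A) n = enat k \<and>
           real k \<le> real (E + 1) * real (floor_log n) + 2 * (real E + 1)"
proof (rule eventually_V_le_log)
  show "V \<Sigma> (lang \<Sigma> A) n \<le> enat (Suc (card X * card (dstates (rd \<Sigma> A))) * Suc (floor_log (Suc n)))"
    for n
    by (rule V_lang_le_reachable_sets[OF nfa wb X reachable])
  show "card X * card (dstates (rd \<Sigma> A)) \<le> E"
    using card_dstates_rd_le[OF nfa] E by (meson mult_le_mono2 order_trans)
qed

theorem theorem5p2:
  "\<exists>c d :: nat \<Rightarrow> real. \<forall>(\<Sigma> :: nat set) (A :: nfa) (L :: nat list set) (m :: nat).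
     finite \<Sigma> \<and> is_nfa \<Sigma> A \<and> L = lang \<Sigma> A \<and> card (states A) = m \<and>
     well_behaved \<Sigma> (rd \<Sigma> A) \<longrightarrow>
       (is_dfa \<Sigma> A \<longrightarrow> (\<forall>\<^sub>F n in sequentially. \<exists>k. V \<Sigma> L n = enat k \<and>
            real k \<le> real (2 ^ m * m + 1) * real (floor_log n) + c m)) \<and>
       (\<forall>\<^sub>F n in sequentially. \<exists>k. V \<Sigma> L n = enat k \<and>
            real k \<le> real (4 ^ m + 1) * real (floor_log n) + d m)"
proof (rule exI[of _ "\<lambda>m. 2 * (real (2 ^ m * m) + 1)"], rule exI[of _ "\<lambda>m. 2 * (real (4 ^ m) + 1)"],
    intro allI impI conjI)
  fix \<Sigma> A L m
  assume "finite \<Sigma> \<and> is_nfa \<Sigma> A \<and> L = lang \<Sigma> A \<and> card (states A) = m \<and> well_behaved \<Sigma> (rd \<Sigma> A)"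
  then have nfa: "is_nfa \<Sigma> A" and L: "L = lang \<Sigma> A" and m: "card (states A) = m"
    and wb: "well_behaved \<Sigma> (rd \<Sigma> A)"
    by auto
  have fin: "finite (states A)"
    using nfa by (simp add: is_nfa_def)
  show "\<forall>\<^sub>F n in sequentially. \<exists>k. V \<Sigma> L n = enat k \<and>
          real k \<le> real (2 ^ m * m + 1) * real (floor_log n) + 2 * (real (2 ^ m * m) + 1)"
    if dfa: "is_dfa \<Sigma> A"
  proof -
    have "card ((\<lambda>q. {q}) ` states A) * 2 ^ card (states A) \<le> 2 ^ m * m"
      using card_image_le[OF fin, of "\<lambda>q. {q}"] m by simp
    moreover have "\<forall>w\<in>lists \<Sigma>. steps A (init A) w \<in> (\<lambda>q. {q}) ` states A"
      using dfa_steps_singleton[OF dfa] by blast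
    ultimately show ?thesis
      unfolding L using fin by (intro eventually_V_lang_le_log[OF nfa wb]) auto
  qed
  have "card (Pow (states A)) * 2 ^ card (states A) = 4 ^ m"
    using fin m by (simp add: card_Pow power_mult_distrib[symmetric])
  then show "\<forall>\<^sub>F n in sequentially. \<exists>k. V \<Sigma> L n = enat k \<and>
          real k \<le> real (4 ^ m + 1) * real (floor_log n) + 2 * (real (4 ^ m) + 1)"
    unfolding L using steps_subset_states[OF nfa] nfa
    by (intro eventually_V_lang_le_log[OF nfa wb, where X = "Pow (states A)"])
      (auto simp: is_nfa_def fin)
qed

end
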